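(* (i) For all $y\in\mathbb{Z}_p$, $S^y\circ\sigma=\sigma\circ S^y+y\,S^{y-1}$ as maps on $C(\mathbb{Z}_p,\mathbb{C}_p)$. (ii) For $\phi\in C(\mathbb{Z}_p,\mathbb{C}_p)$ and $x,y\in\mathbb{Z}_p$, $$T^x(\sigma(\phi))(y)=T^{x+1}(\phi)(y)+y\,T^x(\phi)(y-1),$$ equivalently $\big((\mathbf 1-\mathbf x)^{\star y}\star\sigma(\phi)\big)(x)=\big((\mathbf 1-\mathbf x)^{\star y}\star\phi\big)(x+1)+y\big((\mathbf 1-\mathbf x)^{\star(y-1)}\star\phi\big)(x)$. (iii) If $\psi\in\mathcal{A}$, $\phi\in C(\mathbb{Z}_p,\mathbb{C}_p)$ and $x\in\mathbb{Z}_p$, then $$\big(\psi\star\sigma(\phi)\big)(x)=(\psi\star\phi)(x+1)-\big(D(\psi)\star\phi\big)(x).$$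
   Context: Fix a prime $p$. $\mathbb{C}_p$ denotes the completion of an algebraic closure of $\mathbb{Q}_p$, with absolute value $|\cdot|$ normalized by $|p|=1/p$. $C(\mathbb{Z}_p,\mathbb{C}_p)$ is the $\mathbb{C}_p$-Banach space of continuous functions $\mathbb{Z}_p\to\mathbb{C}_p$ with the sup-norm $\|\cdot\|$. For $n\in\mathbb{Z}_{\ge0}$ and $x\in\mathbb{Z}_p$, $\binom{x}{n}=x(x-1)\cdots(x-n+1)/n!$. For $\phi$ let $(\nabla\phi)(x)=\phi(x+1)-\phi(x)$ and $\sigma(\phi)(x)=\phi(x+1)$; every $\phi$ has Mahler expansion $\phi(x)=\sum_{n\ge0}(\nabla^n\phi)(0)\binom xn$. The convolution $\phi\star\psi$ is the continuous function with Mahler coefficients $(\nabla^n(\phi\star\psi))(0)=\sum_{k=0}^n\binom nk(\nabla^k\phi)(0)(\nabla^{n-k}\psi)(0)$. For $y\in\mathbb{Z}_p$, $S^y(\phi)(x)=\sum_{k\ge0}(-1)^k k!\binom yk\binom xk\phi(x-k)$; for $x\in\mathbb{Z}_p$, $T^x(\phi)(y)=S^y(\phi)(x)$. $\mathbf 1$ is the constant function $1$, $\mathbf x$ is $x\mapsto x$, $(\mathbf 1-\mathbf x)^{\star y}:=S^y(\mathbf 1)$ for $y\in\mathbb{Z}_p$, and $(\mathbf x-\mathbf 1)^{\star n}:=(-1)^nS^n(\mathbf 1)$ for $n\in\mathbb{Z}$. $\mathcal{A}$ is the set of functions $\sum_{n=-\infty}^N a_n(\mathbf x-\mathbf 1)^{\star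 n}$ with $N\in\mathbb{Z}$, $a_n\in\mathbb{C}_p$, $a_n\to0$ as $n\to-\infty$; the coefficients $a_n$ are uniquely determined by the function, and $D:\mathcal{A}\to\mathcal{A}$ is the linear operator $D\big(\sum_{n\le N}a_n(\mathbf x-\mathbf 1)^{\star n}\big)=\sum_{n\le N}na_n(\mathbf x-\mathbf 1)^{\star(n-1)}$. *)

theory Defs
  imports "HOL-Analysis.Analysis" "HOL-Computational_Algebra.Polynomial"
begin

text \<open>The type 'k with its metric plays the role of C_p; the absolute value is
  |x| = dist x 0. The predicate Cp_field characterises C_p up to isometric
  isomorphism: a complete, non-archimedean, algebraically closed valued field of
  characteristic 0 with |p| = 1/p, in which the elements algebraic over
  Q_p (= closure of Q) are dense.\<close>

definition Qp :: "'k::{field_char_0,metric_space} set" where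
  "Qp = closure (range of_rat)"

definition Zp :: "'k::{field_char_0,metric_space} set" where
  "Zp = closure (range of_int)"

definition algebraic_over :: "'k::field set \<Rightarrow> 'k \<Rightarrow> bool" where
  "algebraic_over S x \<longleftrightarrow> (\<exists>q::'k poly. q \<noteq> 0 \<and> (\<forall>i. coeff q i \<in> S) \<and> poly q x = 0)"

definition Cp_field :: "nat \<Rightarrow> 'k::{field_char_0,complete_space} itself \<Rightarrow> bool" where
  "Cp_field p (_ :: 'k itself) \<longleftrightarrow>
     prime p \<and>
     (\<forall>x y::'k. dist x y = dist (x - y) 0) \<and>
     (\<forall>x y::'k. dist (x * y) 0 = dist x 0 * dist y 0) \<and>
     (\<forall>x y::'k. dist (x + y) 0 \<le> max (dist x 0) (dist y 0)) \<and>
     dist (of_nat p :: 'k) 0 = 1 / real p \<and>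
     (\<forall>q::'k poly. degree q > 0 \<longrightarrow> (\<exists>x. poly q x = 0)) \<and>
     closure {x::'k. algebraic_over Qp x} = UNIV"

text \<open>Functions are modelled as total maps 'k => 'k; only values on Zp matter.
  Binomial coefficients (x choose n) are x gchoose n.\<close>

definition nabla :: "('k::field_char_0 \<Rightarrow> 'k) \<Rightarrow> 'k \<Rightarrow> 'k" where
  "nabla \<phi> = (\<lambda>x. \<phi> (x + 1) - \<phi> x)"

definition sigma :: "('k::field_char_0 \<Rightarrow> 'k) \<Rightarrow> 'k \<Rightarrow> 'k" where
  "sigma \<phi> = (\<lambda>x. \<phi> (x + 1))"

definition conv :: "('k::{field_char_0,metric_space} \<Rightarrow> 'k) \<Rightarrow> ('k \<Rightarrow> 'k) \<Rightarrow> 'k \<Rightarrow> 'k" where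
  "conv \<phi> \<psi> = (\<lambda>x. \<Sum>n. (\<Sum>k\<le>n. of_nat (n choose k) * (nabla ^^ k) \<phi> 0 * (nabla ^^ (n - k)) \<psi> 0)
                         * (x gchoose n))"

definition Sop :: "'k::{field_char_0,metric_space} \<Rightarrow> ('k \<Rightarrow> 'k) \<Rightarrow> 'k \<Rightarrow> 'k" where
  "Sop y \<phi> = (\<lambda>x. \<Sum>k. (- 1) ^ k * fact k * (y gchoose k) * (x gchoose k) * \<phi> (x - of_nat k))"

definition Top :: "'k::{field_char_0,metric_space} \<Rightarrow> ('k \<Rightarrow> 'k) \<Rightarrow> 'k \<Rightarrow> 'k" where
  "Top x \<phi> = (\<lambda>y. Sop y \<phi> x)"

definition one_minus_x_pow :: "'k::{field_char_0,metric_space} \<Rightarrow> 'k \<Rightarrow> 'k" where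
  "one_minus_x_pow y = Sop y (\<lambda>_. 1)"

definition x_minus_one_pow :: "int \<Rightarrow> 'k::{field_char_0,metric_space} \<Rightarrow> 'k" where
  "x_minus_one_pow n = (\<lambda>x. (- 1) powi n * Sop (of_int n) (\<lambda>_. 1) x)"

text \<open>Representation of a function of the class A: psi = sum_{n<=N} a_n (x-1)^{*n}
  on Zp, with a_n -> 0 as n -> -infinity.\<close>
definition A_rep :: "int \<Rightarrow> (int \<Rightarrow> 'k) \<Rightarrow> ('k::{field_char_0,metric_space} \<Rightarrow> 'k) \<Rightarrow> bool" where
  "A_rep N a \<psi> \<longleftrightarrow> (a \<longlongrightarrow> 0) at_bot \<and>
     (\<forall>x\<in>Zp. \<psi> x = (\<Sum>k. a (N - int k) * x_minus_one_pow (N - int k) x))"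

definition A_set :: "('k::{field_char_0,metric_space} \<Rightarrow> 'k) set" where
  "A_set = {\<psi>. \<exists>N a. A_rep N a \<psi>}"

text \<open>D(sum a_n (x-1)^{*n}) = sum n a_n (x-1)^{*(n-1)}, well defined by uniqueness of
  the coefficients (values outside Zp are set to 0).\<close>
definition Dop :: "('k::{field_char_0,metric_space} \<Rightarrow> 'k) \<Rightarrow> 'k \<Rightarrow> 'k" where
  "Dop \<psi> = (THE g. \<exists>N a. A_rep N a \<psi> \<and>
     g = (\<lambda>x. if x \<in> Zp then (\<Sum>k. of_int (N - int k) * a (N - int k) *
                                   x_minus_one_pow (N - int k - 1) x) else 0))"

end

theory Submission
  imports Defs
begin

(* Each identity is a telescoping argument for a series that converges because the
   absolute value is non-archimedean.

   (i) In the series for S^y(sigma phi)(x) and S^y(phi)(x+1), Pascal's rule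
   (x+1 choose k) - (x choose k) = (x choose k-1) and the absorption identity
   k (y choose k) = y (y-1 choose k-1) make the k-th terms differ by exactly -y times the
   (k-1)-th term of the series for S^(y-1)(phi)(x); all three series converge since |k!| -> 0.

   (ii), (iii) The convolution psi * phi is the Mahler series whose coefficients are the
   binomial convolution of the Mahler coefficients (nabla^k psi)(0) and (nabla^k phi)(0).
   The coefficients of sigma phi are c_k + c_(k+1), so the Leibniz rule for binomial
   convolution and Pascal's rule for Mahler series give
   (psi * sigma phi)(x) = (psi * phi)(x+1) - (nabla psi * phi)(x)
   as soon as both coefficient sequences tend to 0.  For psi = (1-x)^{*y}, (i) with phi = 1
   gives nabla psi = -y (1-x)^{*(y-1)}; for psi in A, D agrees with nabla on Z_p because
   nabla (x-1)^{*n} = n (x-1)^{*(n-1)}.  The coefficients of a continuous phi tend to 0 by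
   Mahler's theorem, which follows from nabla^(p^t) = sigma^(p^t) - 1 modulo p and uniform
   continuity on the compact set Z_p. *)

section \<open>Finite differences and binomial convolution\<close>

definition binomial_conv :: "(nat \<Rightarrow> 'a::comm_semiring_1) \<Rightarrow> (nat \<Rightarrow> 'a) \<Rightarrow> nat \<Rightarrow> 'a" where
  "binomial_conv a b n = (\<Sum>k\<le>n. of_nat (n choose k) * a k * b (n - k))"

lemma binomial_conv_Suc:
  "binomial_conv a b (Suc n) = binomial_conv (\<lambda>k. a (Suc k)) b n + binomial_conv a (\<lambda>k. b (Suc k)) n"
proof -
  define R where "R = (\<Sum>k\<le>n. of_nat (n choose Suc k) * a (Suc k) * b (n - k))"
  have "binomial_conv a b (Suc n) = a 0 * b (Suc n) + binomial_conv (\<lambda>k. a (Suc k)) b n + R"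
    unfolding binomial_conv_def R_def
    by (subst sum.atMost_Suc_shift) (simp add: sum.distrib algebra_simps)
  moreover have "binomial_conv a (\<lambda>k. b (Suc k)) n = a 0 * b (Suc n) + R"
  proof -
    have "binomial_conv a (\<lambda>k. b (Suc k)) n = (\<Sum>k\<le>Suc n. of_nat (n choose k) * a k * b (Suc n - k))"
      unfolding binomial_conv_def by (auto simp: Suc_diff_le binomial_eq_0 intro!: sum.cong)
    also have "\<dots> = a 0 * b (Suc n) + R"
      unfolding R_def by (subst sum.atMost_Suc_shift) simp
    finally show ?thesis .
  qed
  ultimately show ?thesis
    by (simp add: algebra_simps)
qed

lemma binomial_conv_add_right:
  "binomial_conv a (\<lambda>k. b k + c k) n = binomial_conv a b n + binomial_conv a c n"
  by (simp add: binomial_conv_def sum.distrib algebra_simps)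

lemma binomial_conv_minus_right:
  "binomial_conv a (\<lambda>k. - b k) n = - binomial_conv (a :: nat \<Rightarrow> 'a::comm_ring_1) b n"
  by (simp add: binomial_conv_def sum_negf)

lemma binomial_conv_mult_left:
  "binomial_conv (\<lambda>k. c * a k) b n = c * binomial_conv a b n"
  by (simp add: binomial_conv_def sum_distrib_left algebra_simps)

lemma nabla_funpow_Suc: "(nabla ^^ Suc n) f x = (nabla ^^ n) f (x + 1) - (nabla ^^ n) f x"
  by (simp add: nabla_def)

lemma nabla_funpow_Suc_right: "(nabla ^^ Suc n) f = (nabla ^^ n) (nabla f)"
  by (simp only: funpow_Suc_right comp_def)

lemma nabla_funpow_eq_binomial_conv:
  "(nabla ^^ n) f x = binomial_conv (\<lambda>k. f (x + of_nat k)) (\<lambda>k. (-1) ^ k) n"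
proof (induction n arbitrary: x)
  case 0
  then show ?case
    by (simp add: binomial_conv_def)
next
  case (Suc n)
  have "(\<lambda>k. f (x + of_nat (Suc k))) = (\<lambda>k. f (x + 1 + of_nat k))"
    by (simp add: add_ac)
  then show ?case
    by (simp add: nabla_funpow_Suc Suc.IH binomial_conv_Suc binomial_conv_minus_right del: funpow.simps)
qed

lemma nabla_funpow_mult_left: "(nabla ^^ n) (\<lambda>z. c * f z) x = c * (nabla ^^ n) f x"
  by (simp add: nabla_funpow_eq_binomial_conv binomial_conv_mult_left)

lemma nabla_funpow_diff: "(nabla ^^ n) (\<lambda>z. f z - g z) x = (nabla ^^ n) f x - (nabla ^^ n) g x"
  by (induction n arbitrary: x) (simp_all add: nabla_funpow_Suc algebra_simps del: funpow.simps)

lemma nabla_funpow_shift: "(nabla ^^ n) (\<lambda>z. f (z + c)) x = (nabla ^^ n) f (x + c)"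
  by (simp add: nabla_funpow_eq_binomial_conv add_ac)

definition mahler_coeff :: "('a::field_char_0 \<Rightarrow> 'a) \<Rightarrow> nat \<Rightarrow> 'a" where
  "mahler_coeff f n = (nabla ^^ n) f 0"

lemma mahler_coeff_cong: "(\<And>n. f (of_nat n) = g (of_nat n)) \<Longrightarrow> mahler_coeff f = mahler_coeff g"
  by (rule ext) (simp add: mahler_coeff_def nabla_funpow_eq_binomial_conv)

lemma mahler_coeff_Suc: "mahler_coeff f (Suc n) = mahler_coeff (nabla f) n"
  by (simp only: mahler_coeff_def nabla_funpow_Suc_right)

lemma mahler_coeff_sigma: "mahler_coeff (sigma f) n = mahler_coeff f n + mahler_coeff f (Suc n)"
  unfolding mahler_coeff_def sigma_def nabla_funpow_shift nabla_funpow_Suc by simp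

lemma mahler_coeff_mult_left: "mahler_coeff (\<lambda>z. c * f z) n = c * mahler_coeff f n"
  by (simp add: mahler_coeff_def nabla_funpow_mult_left)

definition mahler_series :: "(nat \<Rightarrow> 'a::{field_char_0,topological_space}) \<Rightarrow> 'a \<Rightarrow> 'a" where
  "mahler_series c x = (\<Sum>n. c n * (x gchoose n))"

lemma conv_eq_mahler_series:
  "conv \<psi> \<phi> = mahler_series (binomial_conv (mahler_coeff \<psi>) (mahler_coeff \<phi>))"
  by (rule ext) (simp add: conv_def mahler_series_def binomial_conv_def mahler_coeff_def)

lemma fact_Suc_mult_gchoose_Suc:
  "fact (Suc k) * (y gchoose Suc k) = y * (fact k * ((y - 1) gchoose k) :: 'a::field_char_0)"
proof -
  have "fact (Suc k) * (y gchoose Suc k) = fact k * (of_nat (Suc k) * (y gchoose Suc k))"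
    by (simp only: fact_Suc mult_ac)
  then show ?thesis
    by (simp only: gbinomial_absorption mult_ac)
qed

section \<open>Non-archimedean valued fields\<close>

definition absv :: "'a::{zero,metric_space} \<Rightarrow> real" where
  "absv x = dist x 0"

locale nonarch_field =
  fixes ty :: "'k::{field_char_0,complete_space} itself"
  assumes dist_eq_absv: "dist (x::'k) y = absv (x - y)"
    and absv_mult: "absv ((x::'k) * y) = absv x * absv y"
    and absv_add_le_max: "absv ((x::'k) + y) \<le> max (absv x) (absv y)"
begin

lemma absv_nonneg [simp]: "absv (x::'k) \<ge> 0"
  by (simp add: absv_def)

lemma absv_eq_0_iff [simp]: "absv (x::'k) = 0 \<longleftrightarrow> x = 0"
  by (simp add: absv_def)

lemma absv_0 [simp]: "absv (0::'k) = 0"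
  by simp

lemma absv_1 [simp]: "absv (1::'k) = 1"
  using absv_mult[of 1 1] by simp

lemma absv_minus_1 [simp]: "absv (-1::'k) = 1"
proof -
  have "absv (-1::'k) * absv (-1::'k) = 1"
    using absv_mult[of "-1" "-1"] by simp
  then have "(absv (-1::'k) - 1) * (absv (-1::'k) + 1) = 0"
    by (simp add: algebra_simps)
  moreover have "absv (-1::'k) + 1 > 0"
    using absv_nonneg[of "-1"] by linarith
  ultimately show ?thesis
    by simp
qed

lemma absv_minus [simp]: "absv (- (x::'k)) = absv x"
  using absv_mult[of "-1" x] by simp

lemma absv_minus_commute: "absv ((x::'k) - y) = absv (y - x)"
  by (metis absv_minus minus_diff_eq)

lemma absv_power: "absv ((x::'k) ^ n) = absv x ^ n"
  by (induction n) (simp_all add: absv_mult)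

lemma absv_sum_le:
  assumes "\<And>i. i \<in> S \<Longrightarrow> absv (f i :: 'k) \<le> B" and "0 \<le> B"
  shows "absv (sum f S) \<le> B"
  using assms
proof (induction S rule: infinite_finite_induct)
  case (insert i S)
  then show ?case
    using absv_add_le_max[of "f i" "sum f S"] by force
qed simp_all

lemma absv_of_nat_le_1: "absv (of_nat n :: 'k) \<le> 1"
proof (induction n)
  case (Suc n)
  then show ?case
    using absv_add_le_max[of 1 "of_nat n"] by simp
qed simp

lemma absv_of_int_le_1: "absv (of_int z :: 'k) \<le> 1"
  by (cases z rule: int_cases) (simp_all add: absv_of_nat_le_1 del: of_nat_Suc)

lemma absv_mult_le_right: "absv (a::'k) \<le> 1 \<Longrightarrow> absv (a * b) \<le> absv b"
  by (simp add: absv_mult mult_left_le_one_le)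

lemma tendsto_iff_absv: "(f \<longlongrightarrow> (l::'k)) F \<longleftrightarrow> ((\<lambda>x. absv (f x - l)) \<longlongrightarrow> 0) F"
  by (subst tendsto_dist_iff) (simp add: dist_eq_absv)

lemma tendsto_0_iff_absv: "(f \<longlongrightarrow> (0::'k)) F \<longleftrightarrow> ((\<lambda>x. absv (f x)) \<longlongrightarrow> 0) F"
  by (simp add: tendsto_iff_absv)

lemma LIMSEQ_0_absv_leI:
  assumes "\<And>e. e > 0 \<Longrightarrow> \<exists>N. \<forall>n\<ge>N. absv (c n :: 'k) \<le> e"
  shows "c \<longlonglongrightarrow> 0"
  unfolding tendsto_0_iff_absv
proof (rule LIMSEQ_I)
  fix r :: real
  assume "r > 0"
  then obtain N where N: "\<And>n. n \<ge> N \<Longrightarrow> absv (c n) \<le> r / 2"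
    using assms[of "r / 2"] by auto
  show "\<exists>N. \<forall>n\<ge>N. norm (absv (c n) - 0) < r"
  proof (intro exI allI impI)
    fix n
    assume "n \<ge> N"
    then show "norm (absv (c n) - 0) < r"
      using N[of n] \<open>r > 0\<close> by simp
  qed
qed

lemma absv_bounded_if_tendsto_0:
  assumes "c \<longlonglongrightarrow> (0::'k)"
  obtains K where "K > 0" and "\<And>n. absv (c n) \<le> K"
  using BseqE[OF convergent_imp_Bseq[OF convergentI[OF assms[unfolded tendsto_0_iff_absv]]]] by auto

lemma tendsto_absv_bound:
  assumes "eventually (\<lambda>x. absv (f x - (l::'k)) \<le> g x) F" and "(g \<longlongrightarrow> 0) F"
  shows "(f \<longlongrightarrow> l) F"
  unfolding tendsto_iff_absv
  by (rule tendsto_sandwich[OF _ assms(1) tendsto_const assms(2)]) simp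

lemma tendsto_add_nonarch:
  assumes "(f \<longlongrightarrow> (a::'k)) F" and "(g \<longlongrightarrow> b) F"
  shows "((\<lambda>x. f x + g x) \<longlongrightarrow> a + b) F"
proof (rule tendsto_absv_bound)
  show "eventually (\<lambda>x. absv (f x + g x - (a + b)) \<le> max (absv (f x - a)) (absv (g x - b))) F"
    by (intro always_eventually allI) (metis absv_add_le_max add_diff_add)
  show "((\<lambda>x. max (absv (f x - a)) (absv (g x - b))) \<longlongrightarrow> 0) F"
    using tendsto_max[of "\<lambda>x. absv (f x - a)" 0 F "\<lambda>x. absv (g x - b)" 0] assms
    unfolding tendsto_iff_absv by simp
qed

lemma tendsto_minus_nonarch: "(f \<longlongrightarrow> (a::'k)) F \<Longrightarrow> ((\<lambda>x. - f x) \<longlongrightarrow> - a) F"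
  unfolding tendsto_iff_absv by (simp add: absv_minus_commute)

lemma tendsto_diff_nonarch:
  "(f \<longlongrightarrow> (a::'k)) F \<Longrightarrow> (g \<longlongrightarrow> b) F \<Longrightarrow> ((\<lambda>x. f x - g x) \<longlongrightarrow> a - b) F"
  using tendsto_add_nonarch[OF _ tendsto_minus_nonarch] by fastforce

lemma tendsto_mult_nonarch:
  assumes "(f \<longlongrightarrow> (a::'k)) F" and "(g \<longlongrightarrow> b) F"
  shows "((\<lambda>x. f x * g x) \<longlongrightarrow> a * b) F"
proof (rule tendsto_absv_bound)
  define u where "u x = absv (f x - a)" for x
  define v where "v x = absv (g x - b)" for x
  have "absv (f x * g x - a * b) \<le> max (u x * v x) (max (absv a * v x) (u x * absv b))" for x
  proof -
    have "absv (f x * g x - a * b) = absv ((f x - a) * (g x - b) + (a * (g x - b) + (f x - a) * b))"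
      by (rule arg_cong[where f = absv]) (simp add: algebra_simps)
    also have "\<dots> \<le> max (absv ((f x - a) * (g x - b))) (absv (a * (g x - b) + (f x - a) * b))"
      by (rule absv_add_le_max)
    also have "\<dots> \<le> max (u x * v x) (max (absv a * v x) (u x * absv b))"
      using absv_add_le_max[of "a * (g x - b)" "(f x - a) * b"]
      by (simp add: u_def v_def absv_mult)
    finally show ?thesis .
  qed
  then show "eventually (\<lambda>x. absv (f x * g x - a * b) \<le> max (u x * v x) (max (absv a * v x) (u x * absv b))) F"
    by simp
  have "(u \<longlongrightarrow> 0) F" "(v \<longlongrightarrow> 0) F"
    using assms unfolding u_def v_def tendsto_iff_absv by auto
  then have "((\<lambda>x. max (u x * v x) (max (absv a * v x) (u x * absv b)))
      \<longlongrightarrow> max (0 * 0) (max (absv a * 0) (0 * absv b))) F"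
    by (intro tendsto_intros)
  then show "((\<lambda>x. max (u x * v x) (max (absv a * v x) (u x * absv b))) \<longlongrightarrow> 0) F"
    by simp
qed

lemma tendsto_prod_nonarch:
  "(\<And>i. i \<in> S \<Longrightarrow> (f i \<longlongrightarrow> (a i::'k)) F) \<Longrightarrow> ((\<lambda>x. \<Prod>i\<in>S. f i x) \<longlongrightarrow> (\<Prod>i\<in>S. a i)) F"
  by (induction S rule: infinite_finite_induct) (simp_all add: tendsto_mult_nonarch)

lemma tendsto_gchoose_nonarch:
  assumes "(f \<longlongrightarrow> (a::'k)) F"
  shows "((\<lambda>x. f x gchoose k) \<longlongrightarrow> a gchoose k) F"
proof -
  have gchoose_eq: "z gchoose k = (\<Prod>i = 0..<k. z - of_nat i) * inverse (fact k)" for z :: 'k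
    by (simp add: gbinomial_mult_fact'[symmetric])
  show ?thesis
    unfolding gchoose_eq
    by (intro tendsto_mult_nonarch tendsto_prod_nonarch tendsto_diff_nonarch assms tendsto_const)
qed

lemma summable_nonarch:
  assumes "f \<longlonglongrightarrow> (0::'k)"
  shows "summable f"
proof -
  have "Cauchy (\<lambda>n. \<Sum>i<n. f i)"
  proof (rule metric_CauchyI)
    fix e :: real
    assume "e > 0"
    then have "e / 2 > 0"
      by simp
    from order_tendstoD(2)[OF assms[unfolded tendsto_0_iff_absv] this] obtain M where M: "\<And>k. k \<ge> M \<Longrightarrow> absv (f k) < e / 2"
      by (auto simp: eventually_sequentially)
    have segment: "dist (\<Sum>i<m. f i) (\<Sum>i<n. f i) < e" if "M \<le> n" "n \<le> m" for m n
    proof -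
      have "(\<Sum>i<m. f i) - (\<Sum>i<n. f i) = (\<Sum>i\<in>{n..<m}. f i)"
        using that by (metis sum_diff_nat_ivl atLeast0LessThan zero_le)
      moreover have "absv (\<Sum>i\<in>{n..<m}. f i) \<le> e / 2"
        using M that \<open>e > 0\<close> by (intro absv_sum_le) (auto intro: less_imp_le)
      ultimately show ?thesis
        using \<open>e > 0\<close> by (simp add: dist_eq_absv)
    qed
    show "\<exists>M. \<forall>m\<ge>M. \<forall>n\<ge>M. dist (\<Sum>i<m. f i) (\<Sum>i<n. f i) < e"
      using segment by (metis dist_commute nle_le)
  qed
  then show ?thesis
    unfolding summable_def sums_def using Cauchy_convergent convergent_def by blast
qed

lemma summable_absv_bound:
  assumes "\<And>n. absv (f n :: 'k) \<le> g n" and "g \<longlonglongrightarrow> 0"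
  shows "summable f"
  by (rule summable_nonarch, rule tendsto_absv_bound[OF _ assms(2)]) (simp add: assms)

lemma absv_limit_le:
  assumes "(f \<longlongrightarrow> (l::'k)) sequentially" and "eventually (\<lambda>n. absv (f n) \<le> B) sequentially"
  shows "absv l \<le> B"
proof -
  have "((\<lambda>n. absv (f n)) \<longlongrightarrow> absv l) sequentially"
    unfolding absv_def by (intro tendsto_dist assms tendsto_const)
  then show ?thesis
    using assms(2) by (rule tendsto_upperbound) simp
qed

lemma absv_suminf_le:
  assumes "summable (f :: nat \<Rightarrow> 'k)" and "\<And>n. absv (f n) \<le> B" and "0 \<le> B"
  shows "absv (suminf f) \<le> B"
  using summable_LIMSEQ[OF assms(1)] by (rule absv_limit_le) (simp add: absv_sum_le assms)

lemma sums_add_nonarch: "f sums (a::'k) \<Longrightarrow> g sums b \<Longrightarrow> (\<lambda>n. f n + g n) sums (a + b)"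
  unfolding sums_def by (simp add: sum.distrib tendsto_add_nonarch)

lemma sums_diff_nonarch: "f sums (a::'k) \<Longrightarrow> g sums b \<Longrightarrow> (\<lambda>n. f n - g n) sums (a - b)"
  unfolding sums_def by (simp add: sum_subtractf tendsto_diff_nonarch)

lemma sums_mult_nonarch: "f sums (a::'k) \<Longrightarrow> (\<lambda>n. c * f n) sums (c * a)"
  unfolding sums_def by (simp add: sum_distrib_left[symmetric] tendsto_mult_nonarch)

lemma sums_sum_nonarch:
  "(\<And>i. i \<in> I \<Longrightarrow> (\<lambda>n. f i n) sums (s i :: 'k)) \<Longrightarrow> (\<lambda>n. \<Sum>i\<in>I. f i n) sums (\<Sum>i\<in>I. s i)"
  by (induction I rule: infinite_finite_induct) (simp_all add: sums_zero sums_add_nonarch)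

lemma sums_Suc_nonarch:
  assumes "f sums (a::'k)"
  shows "(\<lambda>n. f (Suc n)) sums (a - f 0)"
proof -
  have "(\<lambda>n. (\<Sum>i<Suc n. f i) - f 0) \<longlonglongrightarrow> a - f 0"
    using assms unfolding sums_def by (rule tendsto_diff_nonarch[OF LIMSEQ_Suc tendsto_const])
  moreover have "(\<Sum>i<Suc n. f i) - f 0 = (\<Sum>i<n. f (Suc i))" for n
    by (simp only: sum.lessThan_Suc_shift add_diff_cancel_left')
  ultimately show ?thesis
    unfolding sums_def by simp
qed

section \<open>The closure of the integers\<close>

lemma closed_Zp: "closed (Zp :: 'k set)"
  by (simp add: Zp_def)

lemma of_int_in_Zp [simp]: "(of_int z :: 'k) \<in> Zp"
  unfolding Zp_def by (simp add: closure_def)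

lemma of_nat_in_Zp [simp]: "(of_nat n :: 'k) \<in> Zp"
  using of_int_in_Zp[of "int n"] by simp

lemma zero_in_Zp [simp]: "(0 :: 'k) \<in> Zp" and one_in_Zp [simp]: "(1 :: 'k) \<in> Zp"
  using of_nat_in_Zp[of 0] of_nat_in_Zp[of 1] by simp_all

lemma Zp_closed_under_continuous:
  assumes "\<And>x. (f \<longlongrightarrow> f x) (at x)" and "\<And>z. f (of_int z) \<in> (Zp :: 'k set)" and "x \<in> Zp"
  shows "f x \<in> Zp"
proof -
  have "f ` closure (range of_int) \<subseteq> (Zp :: 'k set)"
    using assms(1,2) by (intro image_closure_subset closed_Zp) (auto simp: continuous_on_def intro: tendsto_within_subset)
  then show ?thesis
    using assms(3) unfolding Zp_def by blast
qed

lemma Zp_closed_under_binop: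
  assumes "\<And>x y. ((\<lambda>z. op z y) \<longlongrightarrow> op x y) (at x)" "\<And>x y. (op x \<longlongrightarrow> op x y) (at y)"
    and "\<And>z w. op (of_int z) (of_int w) \<in> (Zp :: 'k set)" and "x \<in> Zp" and "y \<in> Zp"
  shows "op x y \<in> Zp"
proof (rule Zp_closed_under_continuous[of "op x"])
  show "op x (of_int w) \<in> Zp" for w
    using assms(1,3,4) by (rule Zp_closed_under_continuous[of "\<lambda>z. op z (of_int w)"])
qed (use assms in auto)

lemma add_in_Zp [simp]: "x \<in> Zp \<Longrightarrow> y \<in> Zp \<Longrightarrow> x + (y::'k) \<in> Zp"
  by (rule Zp_closed_under_binop)
    (auto intro!: tendsto_add_nonarch tendsto_ident_at simp flip: of_int_add)

lemma diff_in_Zp [simp]: "x \<in> Zp \<Longrightarrow> y \<in> Zp \<Longrightarrow> x - (y::'k) \<in> Zp"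
  by (rule Zp_closed_under_binop)
    (auto intro!: tendsto_diff_nonarch tendsto_ident_at simp flip: of_int_diff)

lemma mult_in_Zp [simp]: "x \<in> Zp \<Longrightarrow> y \<in> Zp \<Longrightarrow> x * (y::'k) \<in> Zp"
  by (rule Zp_closed_under_binop)
    (auto intro!: tendsto_mult_nonarch tendsto_ident_at simp flip: of_int_mult)

lemma gchoose_in_Zp [simp]: "x \<in> (Zp :: 'k set) \<Longrightarrow> x gchoose k \<in> Zp"
  by (rule Zp_closed_under_continuous)
    (auto intro: tendsto_gchoose_nonarch tendsto_ident_at simp flip: of_int_gbinomial)

lemma absv_le_1_if_in_Zp: "x \<in> (Zp :: 'k set) \<Longrightarrow> absv x \<le> 1"
proof -
  have "Zp \<subseteq> cball (0::'k) 1"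
    unfolding Zp_def using absv_of_int_le_1
    by (intro closure_minimal) (auto simp: absv_def dist_commute)
  then show "x \<in> Zp \<Longrightarrow> absv x \<le> 1"
    by (auto simp: absv_def dist_commute)
qed

lemma absv_gchoose_le_1: "x \<in> (Zp :: 'k set) \<Longrightarrow> absv (x gchoose k) \<le> 1"
  by (simp add: absv_le_1_if_in_Zp)

lemma absv_Sop_term_le:
  assumes "x \<in> Zp" and "y \<in> Zp" and "absv (c :: 'k) \<le> B"
  shows "absv ((-1) ^ k * fact k * (y gchoose k) * (x gchoose k) * c) \<le> absv (fact k :: 'k) * B"
proof -
  have "absv ((y gchoose k) * ((x gchoose k) * c)) \<le> absv c"
    using assms(1,2) by (intro order_trans[OF absv_mult_le_right absv_mult_le_right]) (simp_all add: absv_gchoose_le_1)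
  then have "absv (fact k * ((y gchoose k) * ((x gchoose k) * c))) \<le> absv (fact k :: 'k) * B"
    unfolding absv_mult[of "fact k"] using assms(3) order_trans by (blast intro: mult_left_mono absv_nonneg)
  then show ?thesis
    by (simp add: absv_mult absv_power mult.assoc)
qed

lemma Zp_approx_int:
  assumes "x \<in> (Zp :: 'k set)" and "e > 0"
  obtains z :: int where "absv (x - of_int z) < e"
  using assms unfolding Zp_def closure_approachable by (auto simp: dist_eq_absv absv_minus_commute)

lemma Zp_bounded_if_continuous:
  assumes "continuous_on Zp (\<phi> :: 'k \<Rightarrow> 'k)" and "compact (Zp :: 'k set)"
  obtains B where "0 \<le> B" and "\<And>x. x \<in> Zp \<Longrightarrow> absv (\<phi> x) \<le> B"
proof -
  have "bounded (\<phi> ` Zp)"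
    using compact_continuous_image[OF assms] by (rule compact_imp_bounded)
  then obtain B where "\<forall>y\<in>\<phi> ` Zp. dist 0 y \<le> B"
    unfolding bounded_any_center[where a = 0] by blast
  then have "\<And>x. x \<in> Zp \<Longrightarrow> absv (\<phi> x) \<le> B"
    by (auto simp: absv_def dist_commute)
  moreover from this[OF zero_in_Zp] have "0 \<le> B"
    using absv_nonneg order_trans by blast
  ultimately show ?thesis
    using that by blast
qed

section \<open>Mahler series\<close>

lemma absv_nabla_funpow_le:
  assumes "\<And>j. absv (h (x + of_nat j) :: 'k) \<le> B" and "0 \<le> B"
  shows "absv ((nabla ^^ n) h x) \<le> B"
  unfolding nabla_funpow_eq_binomial_conv binomial_conv_def
proof (rule absv_sum_le[OF _ assms(2)])
  fix k
  have "absv (of_nat (n choose k) * h (x + of_nat k) * (-1) ^ (n - k)) \<le> absv (h (x + of_nat k))"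
    by (simp add: absv_mult absv_power mult_left_le_one_le absv_of_nat_le_1)
  then show "absv (of_nat (n choose k) * h (x + of_nat k) * (-1) ^ (n - k)) \<le> B"
    using assms(1) order_trans by blast
qed

lemma mahler_coeff_sums:
  assumes "\<And>n. (\<lambda>j. g j (of_nat n)) sums (f (of_nat n) :: 'k)"
  shows "(\<lambda>j. mahler_coeff (g j) k) sums mahler_coeff f k"
proof -
  have "(\<lambda>j. \<Sum>i\<le>k. (of_nat (k choose i) * (-1) ^ (k - i)) * g j (of_nat i))
      sums (\<Sum>i\<le>k. (of_nat (k choose i) * (-1) ^ (k - i)) * f (of_nat i))"
    by (intro sums_sum_nonarch sums_mult_nonarch assms)
  then show ?thesis
    by (simp add: mahler_coeff_def nabla_funpow_eq_binomial_conv binomial_conv_def mult_ac)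
qed

lemma binomial_conv_tendsto_0:
  assumes a: "a \<longlonglongrightarrow> (0::'k)" and b: "b \<longlonglongrightarrow> (0::'k)"
  shows "binomial_conv a b \<longlonglongrightarrow> 0"
proof (rule LIMSEQ_0_absv_leI)
  fix e :: real
  assume "e > 0"
  obtain \<alpha> where \<alpha>: "\<alpha> > 0" "\<And>k. absv (a k) \<le> \<alpha>"
    using absv_bounded_if_tendsto_0[OF a] by blast
  obtain \<beta> where \<beta>: "\<beta> > 0" "\<And>k. absv (b k) \<le> \<beta>"
    using absv_bounded_if_tendsto_0[OF b] by blast
  obtain N1 where N1: "\<And>k. k \<ge> N1 \<Longrightarrow> absv (a k) < e / \<beta>"
    using order_tendstoD(2)[OF a[unfolded tendsto_0_iff_absv], of "e / \<beta>"] \<open>e > 0\<close> \<beta>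
    by (auto simp: eventually_sequentially)
  obtain N2 where N2: "\<And>k. k \<ge> N2 \<Longrightarrow> absv (b k) < e / \<alpha>"
    using order_tendstoD(2)[OF b[unfolded tendsto_0_iff_absv], of "e / \<alpha>"] \<open>e > 0\<close> \<alpha>
    by (auto simp: eventually_sequentially)
  have "absv (binomial_conv a b n) \<le> e" if "n \<ge> N1 + N2" for n
    unfolding binomial_conv_def
  proof (rule absv_sum_le)
    fix k
    have "absv (of_nat (n choose k) * a k * b (n - k)) \<le> absv (a k) * absv (b (n - k))"
      using absv_mult_le_right[OF absv_of_nat_le_1, of "n choose k" "a k * b (n - k)"]
      by (simp add: absv_mult mult.assoc)
    also have "\<dots> \<le> e"
    proof (cases "k \<ge> N1")
      case True
      then have "absv (a k) * absv (b (n - k)) \<le> e / \<beta> * \<beta>"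
        using N1 \<beta> \<open>e > 0\<close> by (intro mult_mono) (auto intro: less_imp_le)
      then show ?thesis
        using \<beta> by simp
    next
      case False
      then have "n - k \<ge> N2"
        using that by linarith
      then have "absv (a k) * absv (b (n - k)) \<le> \<alpha> * (e / \<alpha>)"
        using N2[of "n - k"] \<alpha> by (intro mult_mono) auto
      then show ?thesis
        using \<alpha> by simp
    qed
    finally show "absv (of_nat (n choose k) * a k * b (n - k)) \<le> e" .
  qed (use \<open>e > 0\<close> in simp)
  then show "\<exists>N. \<forall>n\<ge>N. absv (binomial_conv a b n) \<le> e"
    by blast
qed

lemma summable_mahler_series:
  assumes "c \<longlonglongrightarrow> (0::'k)" and "x \<in> Zp"
  shows "summable (\<lambda>n. c n * (x gchoose n))"
  by (rule summable_absv_bound[OF _ assms(1)[unfolded tendsto_0_iff_absv]])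
    (simp add: absv_mult absv_gchoose_le_1[OF assms(2)] mult_left_le)

lemma mahler_series_sums:
  "c \<longlonglongrightarrow> (0::'k) \<Longrightarrow> x \<in> Zp \<Longrightarrow> (\<lambda>n. c n * (x gchoose n)) sums mahler_series c x"
  unfolding mahler_series_def by (rule summable_sums[OF summable_mahler_series])

lemma mahler_series_add:
  assumes "c \<longlonglongrightarrow> (0::'k)" "d \<longlonglongrightarrow> 0" "x \<in> Zp"
  shows "mahler_series (\<lambda>n. c n + d n) x = mahler_series c x + mahler_series d x"
  using sums_add_nonarch[OF mahler_series_sums mahler_series_sums, OF assms(1,3) assms(2,3)]
  by (simp add: mahler_series_def distrib_right sums_iff)

lemma mahler_series_diff:
  assumes "c \<longlonglongrightarrow> (0::'k)" "d \<longlonglongrightarrow> 0" "x \<in> Zp"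
  shows "mahler_series (\<lambda>n. c n - d n) x = mahler_series c x - mahler_series d x"
  using sums_diff_nonarch[OF mahler_series_sums mahler_series_sums, OF assms(1,3) assms(2,3)]
  by (simp add: mahler_series_def left_diff_distrib sums_iff)

lemma mahler_series_mult_left:
  assumes "c \<longlonglongrightarrow> (0::'k)" "x \<in> Zp"
  shows "mahler_series (\<lambda>n. a * c n) x = a * mahler_series c x"
  using sums_mult_nonarch[OF mahler_series_sums[OF assms], of a]
  by (simp add: mahler_series_def mult.assoc sums_iff)

lemma mahler_series_nabla:
  assumes c: "c \<longlonglongrightarrow> (0::'k)" and x: "x \<in> Zp"
  shows "mahler_series c (x + 1) - mahler_series c x = mahler_series (\<lambda>n. c (Suc n)) x"
proof -
  have "(\<lambda>n. c (Suc n) * ((x + 1) gchoose Suc n)) sums (mahler_series c (x + 1) - c 0)"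
    using sums_Suc_nonarch[OF mahler_series_sums[OF c, of "x + 1"]] x by simp
  moreover have "(\<lambda>n. c (Suc n) * (x gchoose Suc n)) sums (mahler_series c x - c 0)"
    using sums_Suc_nonarch[OF mahler_series_sums[OF c x]] by simp
  ultimately have "(\<lambda>n. c (Suc n) * ((x + 1) gchoose Suc n) - c (Suc n) * (x gchoose Suc n))
      sums ((mahler_series c (x + 1) - c 0) - (mahler_series c x - c 0))"
    by (rule sums_diff_nonarch)
  moreover have "c (Suc n) * ((x + 1) gchoose Suc n) - c (Suc n) * (x gchoose Suc n) = c (Suc n) * (x gchoose n)" for n
    by (simp only: gbinomial_Suc_Suc) (simp add: algebra_simps)
  ultimately show ?thesis
    by (simp add: mahler_series_def sums_iff)
qed

lemma conv_sigma:
  assumes \<psi>: "mahler_coeff \<psi> \<longlonglongrightarrow> (0::'k)"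
    and \<phi>: "mahler_coeff \<phi> \<longlonglongrightarrow> (0::'k)" and x: "x \<in> Zp"
  shows "conv \<psi> (sigma \<phi>) x = conv \<psi> \<phi> (x + 1) - conv (nabla \<psi>) \<phi> x"
proof -
  define c where "c = binomial_conv (mahler_coeff \<psi>) (mahler_coeff \<phi>)"
  define d where "d = binomial_conv (mahler_coeff (nabla \<psi>)) (mahler_coeff \<phi>)"
  have c0: "c \<longlonglongrightarrow> 0"
    unfolding c_def using \<psi> \<phi> by (rule binomial_conv_tendsto_0)
  have c0': "(\<lambda>n. c (Suc n)) \<longlonglongrightarrow> 0"
    using c0 by (rule LIMSEQ_Suc)
  have d0: "d \<longlonglongrightarrow> 0"
    unfolding d_def mahler_coeff_Suc[symmetric, abs_def] using LIMSEQ_Suc[OF \<psi>] \<phi>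
    by (rule binomial_conv_tendsto_0)
  have "binomial_conv (mahler_coeff \<psi>) (mahler_coeff (sigma \<phi>)) = (\<lambda>n. c n + (c (Suc n) - d n))"
    unfolding c_def d_def mahler_coeff_sigma binomial_conv_add_right binomial_conv_Suc
      mahler_coeff_Suc[symmetric, abs_def] by simp
  then have "conv \<psi> (sigma \<phi>) x = mahler_series (\<lambda>n. c n + (c (Suc n) - d n)) x"
    by (simp add: conv_eq_mahler_series)
  also have "\<dots> = mahler_series c x + (mahler_series (\<lambda>n. c (Suc n)) x - mahler_series d x)"
    using mahler_series_add[OF c0 tendsto_diff_nonarch[OF c0' d0, simplified] x]
      mahler_series_diff[OF c0' d0 x] by simp
  also have "\<dots> = mahler_series c (x + 1) - mahler_series d x"
    using mahler_series_nabla[OF c0 x, symmetric] by (simp add: algebra_simps)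
  finally show ?thesis
    by (simp add: conv_eq_mahler_series c_def d_def)
qed

end

section \<open>Mahler's theorem\<close>

lemma power_dvd_fact_mult: "0 < p \<Longrightarrow> p ^ q dvd fact (p * q)"
proof (induction q)
  case (Suc q)
  have "p * Suc q = Suc (p * q + (p - 1))"
    using Suc.prems by simp
  then have "fact (p * Suc q) = (p * Suc q) * fact (p * q + (p - 1))"
    by (simp only: fact_Suc of_nat_id)
  moreover have "p ^ q dvd fact (p * q + (p - 1))"
    by (rule dvd_trans[OF Suc.IH[OF Suc.prems] fact_dvd]) simp
  ultimately show ?case
    by (simp add: mult_dvd_mono)
qed simp

lemma prime_dvd_prime_power_choose:
  assumes "prime p" and "0 < j" and "j < p ^ t"
  shows "p dvd (p ^ t choose j)"
proof (rule ccontr)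
  assume "\<not> p dvd (p ^ t choose j)"
  then have "coprime (p ^ t) (p ^ t choose j)"
    using prime_imp_coprime[OF assms(1)] by simp
  moreover obtain i n where "j = Suc i" and "p ^ t = Suc n"
    using assms(2,3) by (metis gr0_implies_Suc less_nat_zero_code not0_implies_Suc)
  then have "p ^ t dvd (p ^ t choose j) * j"
    using Suc_times_binomial_eq[of n i] by (metis dvd_triv_left)
  ultimately have "p ^ t dvd j"
    using coprime_dvd_mult_right_iff by blast
  then show False
    using assms(2,3) by (simp add: nat_dvd_not_less)
qed

locale padic_field = nonarch_field ty for ty :: "'k::{field_char_0,complete_space} itself" +
  fixes p :: nat
  assumes prime_p: "prime p" and absv_p_less_1: "absv (of_nat p :: 'k) < 1"
begin

lemma p_gt_1: "1 < p"
  using prime_p prime_gt_1_nat by blast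

lemma absv_p_power_tendsto_0: "(\<lambda>t. absv (of_nat p :: 'k) ^ t) \<longlonglongrightarrow> 0"
  using absv_p_less_1 by (intro LIMSEQ_power_zero) simp

lemma absv_p_power_less:
  assumes "e > 0"
  obtains t where "absv (of_nat p :: 'k) ^ t < e"
  using order_tendstoD(2)[OF absv_p_power_tendsto_0 assms] by (auto simp: eventually_sequentially)

lemma absv_of_nat_le_if_dvd:
  assumes "p ^ t dvd n"
  shows "absv (of_nat n :: 'k) \<le> absv (of_nat p :: 'k) ^ t"
proof -
  obtain m where "n = p ^ t * m"
    using assms by blast
  then have "absv (of_nat n :: 'k) = absv (of_nat p :: 'k) ^ t * absv (of_nat m :: 'k)"
    by (simp add: absv_mult absv_power)
  then show ?thesis
    using absv_of_nat_le_1[of m] by (simp add: mult_left_le)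
qed

lemma fact_tendsto_0: "(fact :: nat \<Rightarrow> 'k) \<longlonglongrightarrow> 0"
proof (rule tendsto_absv_bound)
  have "p > 0"
    using p_gt_1 by simp
  have "absv (fact k :: 'k) \<le> absv (of_nat p :: 'k) ^ (k div p)" for k
  proof -
    have "fact (p * (k div p)) dvd (fact k :: nat)"
      by (rule fact_dvd) simp
    then have "p ^ (k div p) dvd fact k"
      using power_dvd_fact_mult[OF \<open>p > 0\<close>] dvd_trans by blast
    then show ?thesis
      using absv_of_nat_le_if_dvd[of "k div p" "fact k"] by simp
  qed
  then show "\<forall>\<^sub>F k in sequentially. absv (fact k - 0 :: 'k) \<le> absv (of_nat p :: 'k) ^ (k div p)"
    by simp
  show "(\<lambda>k. absv (of_nat p :: 'k) ^ (k div p)) \<longlonglongrightarrow> 0"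
    by (rule filterlim_compose[OF absv_p_power_tendsto_0 filterlim_at_top_div_const_nat[OF \<open>p > 0\<close>]])
qed

lemma compact_Zp: "compact (Zp :: 'k set)"
  unfolding compact_eq_totally_bounded
proof (intro conjI allI impI)
  show "complete (Zp :: 'k set)"
    using closed_Zp complete_eq_closed by blast
  fix e :: real
  assume "e > 0"
  then obtain t where t: "absv (of_nat p :: 'k) ^ t < e"
    using absv_p_power_less by blast
  have "x \<in> (\<Union>m\<in>{..<p ^ t}. ball (of_nat m) e)" if "x \<in> Zp" for x :: 'k
  proof -
    obtain z where z: "absv (x - of_int z) < e"
      using Zp_approx_int[OF \<open>x \<in> Zp\<close> \<open>e > 0\<close>] .
    define q where "q = int (p ^ t)"
    define m where "m = nat (z mod q)"
    have "q > 0"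
      using p_gt_1 unfolding q_def by simp
    then have int_m: "int m = z mod q"
      unfolding m_def by simp
    then have "m < p ^ t"
      using \<open>q > 0\<close> unfolding q_def by (metis of_nat_less_iff pos_mod_bound)
    have "z - int m = q * (z div q)"
      unfolding int_m by (rule minus_mod_eq_mult_div)
    then have "(of_int (z - int m) :: 'k) = of_int (q * (z div q))"
      by (rule arg_cong)
    then have m: "of_int z - of_nat m = (of_nat (p ^ t) * of_int (z div q) :: 'k)"
      unfolding q_def by simp
    have "absv (of_int z - of_nat m :: 'k) < e"
      using t absv_of_nat_le_if_dvd[of t "p ^ t"] absv_mult_le_right[OF absv_of_int_le_1]
      unfolding m by (metis absv_mult dvd_refl mult.commute order_le_less_trans)
    then have "absv (x - of_nat m) < e"
      using z absv_add_le_max[of "x - of_int z" "of_int z - of_nat m"] by simp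
    then show ?thesis
      using \<open>m < p ^ t\<close> by (auto simp: dist_eq_absv absv_minus_commute)
  qed
  then show "\<exists>K. finite K \<and> (Zp :: 'k set) \<subseteq> (\<Union>x\<in>K. ball x e)"
    by (intro exI[of _ "of_nat ` {..<p ^ t}"]) auto
qed

lemma Zp_prime_power_shift_close:
  assumes "continuous_on Zp (\<phi> :: 'k \<Rightarrow> 'k)" and "e > 0"
  obtains t where "0 < t" and "\<And>x. x \<in> Zp \<Longrightarrow> absv (\<phi> (x + of_nat (p ^ t)) - \<phi> x) < e"
proof -
  obtain d where "d > 0" and d: "\<And>x x'. x \<in> Zp \<Longrightarrow> x' \<in> Zp \<Longrightarrow> dist x' x < d \<Longrightarrow> dist (\<phi> x') (\<phi> x) < e"
    using compact_uniformly_continuous[OF assms(1) compact_Zp] assms(2)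
    unfolding uniformly_continuous_on_def by metis
  obtain t where t: "absv (of_nat p :: 'k) ^ t < d"
    using absv_p_power_less[OF \<open>d > 0\<close>] .
  have "absv (of_nat p :: 'k) ^ Suc t \<le> absv (of_nat p :: 'k) ^ t"
    using absv_p_less_1 by (simp add: mult_left_le_one_le)
  then have "absv (of_nat (p ^ Suc t) :: 'k) < d"
    using t by (simp add: absv_mult absv_power)
  then have "absv (\<phi> (x + of_nat (p ^ Suc t)) - \<phi> x) < e" if "x \<in> Zp" for x
    using d[of x "x + of_nat (p ^ Suc t)"] that by (simp add: dist_eq_absv del: of_nat_power)
  then show ?thesis
    using that by blast
qed

lemma absv_one_plus_minus_one_power_le:
  assumes "0 < t"
  shows "absv (1 + (-1) ^ (p ^ t) :: 'k) \<le> absv (of_nat p :: 'k)"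
proof (cases "even p")
  case True
  then have "p = 2"
    using prime_odd_nat[OF prime_p] p_gt_1 by (cases "p > 2") auto
  then show ?thesis
    using assms by simp
next
  case False
  then show ?thesis
    using assms by (simp add: even_power)
qed

lemma absv_nabla_prime_power_le:
  assumes "0 < t" and "\<And>m. absv (h (of_nat m) :: 'k) \<le> B" and "0 \<le> B"
  shows "absv ((nabla ^^ (p ^ t)) h (of_nat n))
    \<le> max (absv (h (of_nat n + of_nat (p ^ t)) - h (of_nat n))) (absv (of_nat p :: 'k) * B)"
proof -
  define q where "q = p ^ t"
  define g where "g j = of_nat (q choose j) * h (of_nat n + of_nat j) * (-1) ^ (q - j)" for j
  define D where "D = h (of_nat n + of_nat q) - h (of_nat n)"
  define E where "E = (1 + (-1) ^ q) * h (of_nat n)"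
  define M where "M = (\<Sum>j\<in>{1..<q}. g j)"
  \<comment> \<open>\<open>M\<close> collects the inner binomial coefficients of \<open>(sigma - 1) ^ q\<close>, all divisible by \<open>p\<close>.\<close>
  have "1 < q"
    unfolding q_def using p_gt_1 \<open>0 < t\<close> by (rule one_less_power)
  then have "{..q} = insert q (insert 0 {1..<q})"
    by auto
  then have "(nabla ^^ q) h (of_nat n) = g q + g 0 + M"
    using \<open>1 < q\<close> by (simp add: nabla_funpow_eq_binomial_conv binomial_conv_def g_def M_def add.assoc)
  also have "\<dots> = D + (E + M)"
    by (simp add: g_def D_def E_def algebra_simps)
  finally have split: "(nabla ^^ q) h (of_nat n) = D + (E + M)" .
  have "absv E \<le> absv (of_nat p :: 'k) * B"
    unfolding E_def q_def absv_mult
    using absv_one_plus_minus_one_power_le[OF \<open>0 < t\<close>] assms(2,3) by (simp add: mult_mono)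
  moreover have "absv M \<le> absv (of_nat p :: 'k) * B"
    unfolding M_def
  proof (rule absv_sum_le)
    fix j
    assume "j \<in> {1..<q}"
    then have "p ^ 1 dvd (q choose j)"
      unfolding q_def using prime_dvd_prime_power_choose[OF prime_p] by simp
    then have "absv (of_nat (q choose j) :: 'k) \<le> absv (of_nat p :: 'k)"
      using absv_of_nat_le_if_dvd by fastforce
    then show "absv (g j) \<le> absv (of_nat p :: 'k) * B"
      using assms(2)[of "n + j"] by (simp add: g_def absv_mult absv_power mult_mono)
  qed (simp add: assms(3))
  ultimately have "absv (E + M) \<le> absv (of_nat p :: 'k) * B"
    using absv_add_le_max[of E M] by simp
  then have "absv ((nabla ^^ q) h (of_nat n)) \<le> max (absv D) (absv (of_nat p :: 'k) * B)"
    unfolding split by (rule order_trans[OF absv_add_le_max max.mono[OF order_refl]])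
  then show ?thesis
    unfolding q_def D_def .
qed

lemma absv_nabla_iterate_le:
  assumes "0 < t" and B: "\<And>m. absv (\<phi> (of_nat m) :: 'k) \<le> B" "0 \<le> B"
    and e: "\<And>m. absv (\<phi> (of_nat m + of_nat (p ^ t)) - \<phi> (of_nat m)) \<le> e" "0 \<le> e"
  shows "absv ((nabla ^^ (s * p ^ t)) \<phi> (of_nat n)) \<le> max e (absv (of_nat p :: 'k) ^ s * B)"
proof (induction s arbitrary: n)
  case 0
  then show ?case
    by (simp add: B(1) le_max_iff_disj)
next
  case (Suc s)
  define h where "h = (nabla ^^ (s * p ^ t)) \<phi>"
  have "absv (h (of_nat n + of_nat (p ^ t)) - h (of_nat n)) \<le> e"
    unfolding h_def nabla_funpow_shift[symmetric] nabla_funpow_diff[symmetric]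
    by (rule absv_nabla_funpow_le) (use e in \<open>simp_all flip: of_nat_add\<close>)
  moreover have "absv (of_nat p :: 'k) * max e (absv (of_nat p :: 'k) ^ s * B)
      \<le> max e (absv (of_nat p :: 'k) ^ Suc s * B)"
    using absv_p_less_1 e(2) mult_left_le_one_le[of e "absv (of_nat p :: 'k)"]
    by (auto simp: max_mult_distrib_left le_max_iff_disj)
  ultimately have "absv ((nabla ^^ (p ^ t)) h (of_nat n)) \<le> max e (absv (of_nat p :: 'k) ^ Suc s * B)"
    using absv_nabla_prime_power_le[OF \<open>0 < t\<close>, of h "max e (absv (of_nat p :: 'k) ^ s * B)" n]
      Suc.IH e(2) unfolding h_def by fastforce
  then show ?case
    unfolding h_def by (simp add: funpow_add)
qed

theorem mahler_coeff_tendsto_0: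
  assumes "continuous_on Zp (\<phi> :: 'k \<Rightarrow> 'k)"
  shows "mahler_coeff \<phi> \<longlonglongrightarrow> 0"
proof (rule LIMSEQ_0_absv_leI)
  fix e :: real
  assume "e > 0"
  obtain B where B: "0 \<le> B" "\<And>x. x \<in> Zp \<Longrightarrow> absv (\<phi> x) \<le> B"
    using Zp_bounded_if_continuous[OF assms compact_Zp] by blast
  obtain t where t: "0 < t" "\<And>x. x \<in> Zp \<Longrightarrow> absv (\<phi> (x + of_nat (p ^ t)) - \<phi> x) < e"
    using Zp_prime_power_shift_close[OF assms \<open>e > 0\<close>] by blast
  obtain s where s: "absv (of_nat p :: 'k) ^ s * B \<le> e"
  proof -
    obtain N where "\<forall>n\<ge>N. B * absv (of_nat p :: 'k) ^ n < e"
      using order_tendstoD(2)[OF tendsto_mult_right_zero[OF absv_p_power_tendsto_0, of B] \<open>e > 0\<close>]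
      by (auto simp: eventually_sequentially)
    then have "B * absv (of_nat p :: 'k) ^ N < e"
      by blast
    then show thesis
      using that[of N] by (simp add: mult.commute)
  qed
  have iterate: "absv ((nabla ^^ (s * p ^ t)) \<phi> (of_nat j)) \<le> max e (absv (of_nat p :: 'k) ^ s * B)" for j
    by (rule absv_nabla_iterate_le[OF t(1)]) (use B t \<open>e > 0\<close> in \<open>auto intro: less_imp_le\<close>)
  have "absv (mahler_coeff \<phi> m) \<le> e" if "m \<ge> s * p ^ t" for m
  proof -
    have "m = (m - s * p ^ t) + s * p ^ t"
      using that by simp
    then have "mahler_coeff \<phi> m = (nabla ^^ (m - s * p ^ t)) ((nabla ^^ (s * p ^ t)) \<phi>) (of_nat 0)"
      unfolding mahler_coeff_def by (metis funpow_add comp_apply of_nat_0)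
    also have "absv \<dots> \<le> max e (absv (of_nat p :: 'k) ^ s * B)"
      by (rule absv_nabla_funpow_le) (use iterate \<open>e > 0\<close> in simp_all)
    finally show ?thesis
      using s by simp
  qed
  then show "\<exists>N. \<forall>m\<ge>N. absv (mahler_coeff \<phi> m) \<le> e"
    by blast
qed

section \<open>Shift identities\<close>

lemma summable_Sop_series:
  assumes "x \<in> Zp" and "y \<in> Zp" and "\<And>k. absv (c k :: 'k) \<le> B"
  shows "summable (\<lambda>k. (-1) ^ k * fact k * (y gchoose k) * (x gchoose k) * c k)"
proof (rule summable_absv_bound)
  show "absv ((-1) ^ k * fact k * (y gchoose k) * (x gchoose k) * c k) \<le> absv (fact k :: 'k) * B" for k
    using assms by (rule absv_Sop_term_le)
  show "(\<lambda>k. absv (fact k :: 'k) * B) \<longlonglongrightarrow> 0"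
    using fact_tendsto_0 unfolding tendsto_0_iff_absv by (rule tendsto_mult_left_zero)
qed

theorem Sop_sigma:
  assumes y: "y \<in> Zp" and x: "x \<in> Zp" and B: "\<And>z. z \<in> Zp \<Longrightarrow> absv (\<phi> z :: 'k) \<le> B"
  shows "Sop y (sigma \<phi>) x = sigma (Sop y \<phi>) x + y * Sop (y - 1) \<phi> x"
proof -
  define t1 where "t1 k = (-1) ^ k * fact k * (y gchoose k) * (x gchoose k) * \<phi> (x - of_nat k + 1)" for k
  define t2 where "t2 k = (-1) ^ k * fact k * (y gchoose k) * ((x + 1) gchoose k) * \<phi> (x + 1 - of_nat k)" for k
  define t3 where "t3 k = (-1) ^ k * fact k * ((y - 1) gchoose k) * (x gchoose k) * \<phi> (x - of_nat k)" for k
  have s1: "t1 sums Sop y (sigma \<phi>) x"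
    unfolding t1_def Sop_def sigma_def
    by (rule summable_sums, rule summable_Sop_series[OF x y, of _ B]) (simp add: B x)
  have s2: "t2 sums sigma (Sop y \<phi>) x"
    unfolding t2_def Sop_def sigma_def
    by (rule summable_sums, rule summable_Sop_series[of _ y _ B]) (simp_all add: B x y)
  have s3: "t3 sums Sop (y - 1) \<phi> x"
    unfolding t3_def Sop_def
    by (rule summable_sums, rule summable_Sop_series[of x _ _ B]) (simp_all add: B x y)
  have "t2 (Suc k) - t1 (Suc k) = - y * t3 k" for k
  proof -
    have "t2 (Suc k) - t1 (Suc k)
        = (-1) ^ Suc k * (fact (Suc k) * (y gchoose Suc k)) * (x gchoose k) * \<phi> (x - of_nat k)"
      unfolding t1_def t2_def gbinomial_Suc_Suc by (simp add: algebra_simps)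
    then show ?thesis
      unfolding fact_Suc_mult_gchoose_Suc t3_def by (simp add: algebra_simps)
  qed
  moreover have "t2 0 - t1 0 = 0"
    by (simp add: t1_def t2_def)
  ultimately have "(\<lambda>k. - y * t3 k) sums (sigma (Sop y \<phi>) x - Sop y (sigma \<phi>) x)"
    using sums_Suc_nonarch[OF sums_diff_nonarch[OF s2 s1]] by simp
  moreover have "(\<lambda>k. - y * t3 k) sums (- y * Sop (y - 1) \<phi> x)"
    using s3 by (rule sums_mult_nonarch)
  ultimately show ?thesis
    by (simp add: sums_iff algebra_simps)
qed

lemma one_minus_x_pow_nabla:
  assumes "y \<in> Zp" and "x \<in> (Zp :: 'k set)"
  shows "nabla (one_minus_x_pow y) x = - y * one_minus_x_pow (y - 1) x"
  using Sop_sigma[OF assms, of "\<lambda>_. 1" 1]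
  by (simp add: one_minus_x_pow_def nabla_def sigma_def)

lemma one_minus_x_pow_at_0: "one_minus_x_pow y (0 :: 'k) = 1"
proof -
  have "(\<lambda>k. (-1) ^ k * fact k * (y gchoose k) * ((0 :: 'k) gchoose k) * 1) = (\<lambda>k. if k = 0 then 1 else 0)"
    by (auto simp: gbinomial_0_left)
  then show ?thesis
    unfolding one_minus_x_pow_def Sop_def using sums_single[of 0 "\<lambda>_. 1 :: 'k"] by (simp add: sums_iff)
qed

lemma mahler_coeff_nabla_one_minus_x_pow:
  assumes "y \<in> (Zp :: 'k set)"
  shows "mahler_coeff (nabla (one_minus_x_pow y)) = (\<lambda>k. - y * mahler_coeff (one_minus_x_pow (y - 1)) k)"
proof -
  have "mahler_coeff (nabla (one_minus_x_pow y)) = mahler_coeff (\<lambda>z. (- y) * one_minus_x_pow (y - 1) z)"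
    by (rule mahler_coeff_cong) (rule one_minus_x_pow_nabla[OF assms of_nat_in_Zp])
  then show ?thesis
    unfolding mahler_coeff_mult_left[abs_def] .
qed

lemma mahler_coeff_one_minus_x_pow:
  "y \<in> (Zp :: 'k set) \<Longrightarrow> mahler_coeff (one_minus_x_pow y) k = (-1) ^ k * fact k * (y gchoose k :: 'k)"
proof (induction k arbitrary: y)
  case 0
  then show ?case
    by (simp add: mahler_coeff_def one_minus_x_pow_at_0)
next
  case (Suc k)
  have "mahler_coeff (one_minus_x_pow y) (Suc k) = - y * ((-1) ^ k * fact k * ((y - 1) gchoose k))"
    using Suc by (simp add: mahler_coeff_Suc mahler_coeff_nabla_one_minus_x_pow)
  also have "\<dots> = (-1) ^ Suc k * (fact (Suc k) * (y gchoose Suc k))"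
    unfolding fact_Suc_mult_gchoose_Suc by (simp add: algebra_simps)
  finally show ?case
    by (simp only: mult.assoc)
qed

lemma absv_mahler_coeff_one_minus_x_pow_le:
  "y \<in> (Zp :: 'k set) \<Longrightarrow> absv (mahler_coeff (one_minus_x_pow y) k) \<le> absv (fact k :: 'k)"
  by (simp add: mahler_coeff_one_minus_x_pow absv_mult absv_power absv_gchoose_le_1 mult_left_le)

lemma mahler_coeff_one_minus_x_pow_tendsto_0:
  "y \<in> (Zp :: 'k set) \<Longrightarrow> mahler_coeff (one_minus_x_pow y) \<longlonglongrightarrow> (0 :: 'k)"
  by (rule tendsto_absv_bound[OF _ fact_tendsto_0[unfolded tendsto_0_iff_absv]])
    (simp add: absv_mahler_coeff_one_minus_x_pow_le)

lemma conv_one_minus_x_pow_sigma: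
  assumes y: "y \<in> Zp" and \<phi>: "mahler_coeff \<phi> \<longlonglongrightarrow> (0 :: 'k)" and x: "x \<in> Zp"
  shows "conv (one_minus_x_pow y) (sigma \<phi>) x =
    conv (one_minus_x_pow y) \<phi> (x + 1) + y * conv (one_minus_x_pow (y - 1)) \<phi> x"
proof -
  have y1: "mahler_coeff (one_minus_x_pow (y - 1)) \<longlonglongrightarrow> 0"
    using y by (simp add: mahler_coeff_one_minus_x_pow_tendsto_0)
  have "conv (nabla (one_minus_x_pow y)) \<phi> x
      = mahler_series (\<lambda>n. - y * binomial_conv (mahler_coeff (one_minus_x_pow (y - 1))) (mahler_coeff \<phi>) n) x"
    unfolding conv_eq_mahler_series mahler_coeff_nabla_one_minus_x_pow[OF y] binomial_conv_mult_left ..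
  also have "\<dots> = - y * conv (one_minus_x_pow (y - 1)) \<phi> x"
    unfolding conv_eq_mahler_series by (rule mahler_series_mult_left[OF binomial_conv_tendsto_0[OF y1 \<phi>] x])
  finally have "conv (nabla (one_minus_x_pow y)) \<phi> x = - y * conv (one_minus_x_pow (y - 1)) \<phi> x" .
  then show ?thesis
    using conv_sigma[OF mahler_coeff_one_minus_x_pow_tendsto_0[OF y] \<phi> x] by simp
qed

lemma absv_one_minus_x_pow_le_1:
  assumes "y \<in> Zp" and "x \<in> (Zp :: 'k set)"
  shows "absv (one_minus_x_pow y x) \<le> 1"
proof -
  have "absv ((-1) ^ k * fact k * (y gchoose k) * (x gchoose k) * 1) \<le> 1" for k
    using absv_Sop_term_le[OF assms(2,1), where c = 1 and B = 1 and k = k] absv_of_nat_le_1[of "fact k"] by simp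
  moreover have "summable (\<lambda>k. (-1) ^ k * fact k * (y gchoose k) * (x gchoose k) * (1 :: 'k))"
    by (rule summable_Sop_series[OF assms(2,1), where B = 1]) simp
  ultimately show ?thesis
    unfolding one_minus_x_pow_def Sop_def by (intro absv_suminf_le) simp_all
qed

lemma x_minus_one_pow_eq: "x_minus_one_pow n = (\<lambda>x. (-1) powi n * one_minus_x_pow (of_int n) x)"
  by (simp add: x_minus_one_pow_def one_minus_x_pow_def)

lemma absv_minus_1_powi [simp]: "absv ((-1 :: 'k) powi n) = 1"
  by (simp add: power_int_def absv_power)

lemma absv_x_minus_one_pow_le_1: "x \<in> Zp \<Longrightarrow> absv (x_minus_one_pow n x :: 'k) \<le> 1"
  by (simp add: x_minus_one_pow_eq absv_mult absv_one_minus_x_pow_le_1)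

lemma x_minus_one_pow_nabla:
  assumes "x \<in> (Zp :: 'k set)"
  shows "nabla (x_minus_one_pow n) x = of_int n * x_minus_one_pow (n - 1) x"
proof -
  have "nabla (x_minus_one_pow n) x = (-1) powi n * nabla (one_minus_x_pow (of_int n)) x"
    by (simp add: x_minus_one_pow_eq nabla_def right_diff_distrib)
  also have "\<dots> = (-1) powi n * (- of_int n * one_minus_x_pow (of_int n - 1) x)"
    by (simp only: one_minus_x_pow_nabla[OF of_int_in_Zp assms])
  also have "\<dots> = of_int n * x_minus_one_pow (n - 1) x"
    by (simp add: x_minus_one_pow_eq power_int_diff)
  finally show ?thesis .
qed

lemma absv_mahler_coeff_x_minus_one_pow_le:
  "absv (mahler_coeff (x_minus_one_pow n :: 'k \<Rightarrow> 'k) k) \<le> absv (fact k :: 'k)"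
  unfolding x_minus_one_pow_eq mahler_coeff_mult_left absv_mult absv_minus_1_powi
  using absv_mahler_coeff_one_minus_x_pow_le[OF of_int_in_Zp, of n k] by simp

lemma A_rep_coeff_tendsto_0:
  assumes "A_rep N a (\<psi> :: 'k \<Rightarrow> 'k)"
  shows "(\<lambda>k. a (N - int k)) \<longlonglongrightarrow> 0"
proof -
  have "filterlim (\<lambda>k. N - int k) at_bot sequentially"
  proof -
    have "\<forall>k\<ge>nat (N - Z). N - int k \<le> Z" for Z
      by auto
    then show ?thesis
      unfolding filterlim_at_bot eventually_sequentially by blast
  qed
  moreover have "(a \<longlongrightarrow> 0) at_bot"
    using assms unfolding A_rep_def by blast
  ultimately show ?thesis
    using filterlim_compose[of a "nhds 0" at_bot] by blast
qed

lemma A_rep_sums: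
  assumes "A_rep N a (\<psi> :: 'k \<Rightarrow> 'k)" and "x \<in> Zp"
  shows "(\<lambda>k. a (N - int k) * x_minus_one_pow (N - int k) x) sums \<psi> x"
proof -
  have "summable (\<lambda>k. a (N - int k) * x_minus_one_pow (N - int k) x)"
  proof (rule summable_absv_bound)
    show "absv (a (N - int k) * x_minus_one_pow (N - int k) x) \<le> absv (a (N - int k))" for k
      using absv_x_minus_one_pow_le_1[OF assms(2)] by (simp add: absv_mult mult_left_le)
    show "(\<lambda>k. absv (a (N - int k))) \<longlonglongrightarrow> 0"
      using A_rep_coeff_tendsto_0[OF assms(1)] unfolding tendsto_0_iff_absv .
  qed
  then show ?thesis
    using assms unfolding A_rep_def by (simp add: summable_sums)
qed

lemma A_rep_nabla_sums:
  assumes "A_rep N a (\<psi> :: 'k \<Rightarrow> 'k)" and "x \<in> Zp"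
  shows "(\<lambda>k. of_int (N - int k) * a (N - int k) * x_minus_one_pow (N - int k - 1) x) sums nabla \<psi> x"
proof -
  have "(\<lambda>k. a (N - int k) * x_minus_one_pow (N - int k) (x + 1) - a (N - int k) * x_minus_one_pow (N - int k) x)
      sums nabla \<psi> x"
    unfolding nabla_def using assms by (intro sums_diff_nonarch A_rep_sums) simp_all
  moreover have "a m * x_minus_one_pow m (x + 1) - a m * x_minus_one_pow m x
      = of_int m * a m * x_minus_one_pow (m - 1) x" for m
    using x_minus_one_pow_nabla[OF assms(2), of m]
    by (simp add: nabla_def right_diff_distrib[symmetric] mult.commute mult.left_commute)
  ultimately show ?thesis
    by simp
qed

lemma Dop_eq_nabla:
  assumes "\<psi> \<in> (A_set :: ('k \<Rightarrow> 'k) set)"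
  shows "Dop \<psi> = (\<lambda>x. if x \<in> Zp then nabla \<psi> x else 0)"
proof -
  define G :: "int \<Rightarrow> (int \<Rightarrow> 'k) \<Rightarrow> 'k \<Rightarrow> 'k"
    where "G N a = (\<lambda>x. if x \<in> Zp
      then \<Sum>k. of_int (N - int k) * a (N - int k) * x_minus_one_pow (N - int k - 1) x else 0)" for N a
  have G: "G N a = (\<lambda>x. if x \<in> Zp then nabla \<psi> x else 0)" if "A_rep N a \<psi>" for N a
    using A_rep_nabla_sums[OF that] by (auto simp: G_def sums_iff)
  obtain N a where rep: "A_rep N a \<psi>"
    using assms unfolding A_set_def by blast
  show ?thesis
    unfolding Dop_def G_def[symmetric]
  proof (rule the_equality)
    show "\<exists>N a. A_rep N a \<psi> \<and> (\<lambda>x. if x \<in> Zp then nabla \<psi> x else 0) = G N a"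
      using rep G[OF rep] by metis
  qed (use G in auto)
qed

lemma mahler_coeff_A_tendsto_0:
  assumes "\<psi> \<in> (A_set :: ('k \<Rightarrow> 'k) set)"
  shows "mahler_coeff \<psi> \<longlonglongrightarrow> 0"
proof -
  obtain N a where rep: "A_rep N a \<psi>"
    using assms unfolding A_set_def by blast
  obtain \<alpha> where "\<alpha> > 0" and \<alpha>: "\<And>j. absv (a (N - int j)) \<le> \<alpha>"
    using absv_bounded_if_tendsto_0[OF A_rep_coeff_tendsto_0[OF rep]] by blast
  have "absv (mahler_coeff \<psi> k) \<le> \<alpha> * absv (fact k :: 'k)" for k
  proof -
    have sums: "(\<lambda>j. mahler_coeff (\<lambda>z. a (N - int j) * x_minus_one_pow (N - int j) z) k) sums mahler_coeff \<psi> k"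
      by (rule mahler_coeff_sums) (simp add: A_rep_sums[OF rep])
    have "absv (mahler_coeff (\<lambda>z. a (N - int j) * x_minus_one_pow (N - int j) z) k) \<le> \<alpha> * absv (fact k :: 'k)" for j
      unfolding mahler_coeff_mult_left absv_mult
      using \<alpha>[of j] absv_mahler_coeff_x_minus_one_pow_le[of "N - int j" k] \<open>\<alpha> > 0\<close>
      by (intro mult_mono) simp_all
    then show ?thesis
      unfolding sums_unique[OF sums] using \<open>\<alpha> > 0\<close>
      by (intro absv_suminf_le[OF sums_summable[OF sums]]) simp_all
  qed
  moreover have "(\<lambda>k. \<alpha> * absv (fact k :: 'k)) \<longlonglongrightarrow> 0"
    using fact_tendsto_0 unfolding tendsto_0_iff_absv by (rule tendsto_mult_right_zero)
  ultimately show ?thesis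
    by (intro tendsto_absv_bound) simp_all
qed

theorem conv_Dop_sigma:
  assumes \<psi>: "\<psi> \<in> (A_set :: ('k \<Rightarrow> 'k) set)" and \<phi>: "mahler_coeff \<phi> \<longlonglongrightarrow> (0 :: 'k)" and x: "x \<in> Zp"
  shows "conv \<psi> (sigma \<phi>) x = conv \<psi> \<phi> (x + 1) - conv (Dop \<psi>) \<phi> x"
proof -
  have "mahler_coeff (Dop \<psi>) = mahler_coeff (nabla \<psi>)"
    by (rule mahler_coeff_cong) (simp add: Dop_eq_nabla[OF \<psi>])
  then show ?thesis
    using conv_sigma[OF mahler_coeff_A_tendsto_0[OF \<psi>] \<phi> x] by (simp add: conv_eq_mahler_series)
qed

end

lemma padic_field_if_Cp_field:
  assumes "Cp_field p TYPE('k::{field_char_0,complete_space})"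
  shows "padic_field TYPE('k) p"
proof -
  have "1 < p"
    using assms prime_gt_1_nat unfolding Cp_field_def by blast
  then show ?thesis
    using assms unfolding Cp_field_def padic_field_def nonarch_field_def padic_field_axioms_def absv_def
    by simp
qed

theorem proposition6p10:
  fixes p :: nat
  assumes "Cp_field p TYPE('k::{field_char_0,complete_space})"
  shows
    "(\<forall>y \<in> (Zp :: 'k set). \<forall>\<phi>. continuous_on Zp \<phi> \<longrightarrow>
        (\<forall>x \<in> Zp. Sop y (sigma \<phi>) x = sigma (Sop y \<phi>) x + y * Sop (y - 1) \<phi> x))
   \<and> (\<forall>\<phi>. continuous_on (Zp :: 'k set) \<phi> \<longrightarrow> (\<forall>x \<in> Zp. \<forall>y \<in> Zp.
        Top x (sigma \<phi>) y = Top (x + 1) \<phi> y + y * Top x \<phi> (y - 1) \<and>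
        conv (one_minus_x_pow y) (sigma \<phi>) x =
          conv (one_minus_x_pow y) \<phi> (x + 1) + y * conv (one_minus_x_pow (y - 1)) \<phi> x))
   \<and> (\<forall>\<psi> \<in> (A_set :: ('k \<Rightarrow> 'k) set). \<forall>\<phi>. continuous_on Zp \<phi> \<longrightarrow> (\<forall>x \<in> Zp.
        conv \<psi> (sigma \<phi>) x = conv \<psi> \<phi> (x + 1) - conv (Dop \<psi>) \<phi> x))"
proof -
  interpret padic_field "TYPE('k)" p
    using assms by (rule padic_field_if_Cp_field)
  have Sop: "Sop y (sigma \<phi>) x = sigma (Sop y \<phi>) x + y * Sop (y - 1) \<phi> x"
    if "y \<in> Zp" "continuous_on Zp \<phi>" "x \<in> Zp" for y x :: 'k and \<phi>
  proof -
    obtain B where "\<And>z. z \<in> Zp \<Longrightarrow> absv (\<phi> z) \<le> B"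
      using Zp_bounded_if_continuous[OF \<open>continuous_on Zp \<phi>\<close> compact_Zp] by blast
    then show ?thesis
      using Sop_sigma that by blast
  qed
  show ?thesis
    using Sop mahler_coeff_tendsto_0 conv_one_minus_x_pow_sigma conv_Dop_sigma
    by (simp add: Top_def sigma_def)
qed

end
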